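(* Let $M \in \mathbb{N}$, let $p \in \mathbb{Z}_M^{\times}$, let $q_1, q_2 \in \mathbb{Z}_M$, and let $K, C$ be positive integers with $\gcd(K, M) = 1$. Let $\varphi, \psi : \mathbb{Q} \to \mathbb{Z}$ satisfy $\varphi(x + C) = -\varphi(x)$ and $\psi(x + C) = -\psi(x)$ for all $x \in \frac{C}{K}\mathbb{Z}$ (their values are then reduced modulo $M$). Each grid point $x = \frac{j}{K}$ ($j \in \mathbb{Z}$) is identified with the element $\bar{x} := j \cdot K^{-1} \in \mathbb{Z}_M$. Let $x \mapsto p^x$ be an assignment $\frac{1}{K}\mathbb{Z} \to \mathbb{Z}_M$ satisfying $p^{x+a} = p^x \cdot p^a$ in $\mathbb{Z}_M$ for all $x \in \frac{1}{K}\mathbb{Z}$ and all integers $a \ge 0$. For $x \in \frac{1}{K}\mathbb{Z}$ with $\bar{x} \in \mathbb{Z}_M^{\times}$ define \[ s_M(x) := \big(p^x + q_1 \varphi(Cx) + q_2 \psi(Cx)\big)\cdot \bar{x}^{-1} \in \mathbb{Z}_M . \] Let $t \in \frac{1}{K}\mathbb{Z}$ and nonnegative integers $u, v$ be such that $\bar{t}$, $\overline{t+2v+1}$, $\overline{t+2u}$, $\overline{t+2u+2v+1}$ are units of $\mathbb{Z}_M$, and put $s_0 = s_M(t)$, $s_1 = s_M(t+2v+1)$, $s_2 = s_M(t+2u)$, $s_3 = s_M(t+2u+2v+1)$. Suppose the element $s_2 \cdot \overline{(t + 2u)} + s_3 \cdot \overline{(t + 2u + 2v + 1)}$ is a unit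 in $\mathbb{Z}_M$. Then \[ I_M(t;u,v) := \frac{s_0 \cdot \bar{t} + s_1 \cdot \overline{(t + 2v + 1)}}{s_2 \cdot \overline{(t + 2u)} + s_3 \cdot \overline{(t + 2u + 2v + 1)}} \equiv \frac{1}{p^{2u}} \pmod M. \]
   Context: All arithmetic is in the ring $\mathbb{Z}_M = \mathbb{Z}/M\mathbb{Z}$; $K^{-1}$ is the inverse of $K$ modulo $M$. The oscillators $\varphi,\psi$ are integer-valued and antiperiodic with antiperiod $C$ on the grid $\frac{C}{K}\mathbb{Z}$. *)

theory Defs
  imports "HOL-Number_Theory.Number_Theory"
begin

text \<open>Elements of Z_M are represented by integers; equality in Z_M is congruence mod M.\<close>

definition inv_mod :: "nat \<Rightarrow> int \<Rightarrow> int" where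
  "inv_mod M a = (SOME b. [a * b = 1] (mod int M))"

definition grid_bar :: "nat \<Rightarrow> int \<Rightarrow> rat \<Rightarrow> int" where
  "grid_bar M K x = \<lfloor>x * of_int K\<rfloor> * inv_mod M K"

definition sM :: "nat \<Rightarrow> int \<Rightarrow> int \<Rightarrow> int \<Rightarrow> int \<Rightarrow> (rat \<Rightarrow> int) \<Rightarrow> (rat \<Rightarrow> int)
    \<Rightarrow> (rat \<Rightarrow> int) \<Rightarrow> rat \<Rightarrow> int" where
  "sM M K C q1 q2 \<phi> \<psi> pw x =
     (pw x + q1 * \<phi> (of_int C * x) + q2 * \<psi> (of_int C * x)) * inv_mod M (grid_bar M K x)"

end

theory Submission
  imports Defs
begin

text \<open>Multiplying \<open>s\<^sub>M(x)\<close> back by the residue of \<open>x\<close> leaves \<open>p\<^sup>x + q\<^sub>1 \<phi>(Cx) + q\<^sub>2 \<psi>(Cx)\<close>.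
  Under an integer shift \<open>m\<close> the oscillating terms pick up the sign \<open>(-1)\<^sup>m\<close>, so they cancel
  in each of the two pairs of the quotient, whose points differ by the odd shift \<open>2v+1\<close>. Hence
  the numerator is \<open>p\<^sup>t (1 + p\<^sup>2\<^sup>v\<^sup>+\<^sup>1)\<close> and the denominator, shifted by \<open>2u\<close>, is \<open>p\<^sup>2\<^sup>u\<close> times it.\<close>

definition sM_num :: "int \<Rightarrow> int \<Rightarrow> int \<Rightarrow> (rat \<Rightarrow> int) \<Rightarrow> (rat \<Rightarrow> int) \<Rightarrow> (rat \<Rightarrow> int)
    \<Rightarrow> rat \<Rightarrow> int" where
  "sM_num C q1 q2 \<phi> \<psi> pw x = pw x + q1 * \<phi> (of_int C * x) + q2 * \<psi> (of_int C * x)"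

lemma cong_mult_inv_mod:
  assumes "coprime a (int M)"
  shows "[a * inv_mod M a = 1] (mod int M)"
  unfolding inv_mod_def using cong_solve_coprime_int[OF assms] by (rule someI_ex)

lemma cong_mult_inv_mod_factor:
  assumes d_unit: "coprime d (int M)" and d_eq: "[d = c * n] (mod int M)"
  shows "[n * inv_mod M d = inv_mod M c] (mod int M)"
proof -
  have "coprime (c * n) (int M)"
    using d_unit d_eq cong_imp_coprime by blast
  then have c_unit: "coprime c (int M)" by simp
  have "[n * inv_mod M d = n * inv_mod M d * (c * inv_mod M c)] (mod int M)"
    using cong_mult[OF cong_refl cong_sym[OF cong_mult_inv_mod[OF c_unit]]] by simp
  also have "n * inv_mod M d * (c * inv_mod M c) = (c * n) * inv_mod M d * inv_mod M c"
    by (simp only: mult_ac)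
  also have "[(c * n) * inv_mod M d * inv_mod M c = d * inv_mod M d * inv_mod M c] (mod int M)"
    using d_eq by (intro cong_mult cong_refl) (simp add: cong_sym)
  also have "[d * inv_mod M d * inv_mod M c = 1 * inv_mod M c] (mod int M)"
    using cong_mult_inv_mod[OF d_unit] by (intro cong_mult cong_refl)
  finally show ?thesis by simp
qed

lemma antiperiodic_grid_shift:
  fixes f :: "rat \<Rightarrow> int" and C K j :: int
  assumes K_nz: "K \<noteq> 0"
    and anti: "\<And>n::int. f (of_int C * of_int n / of_int K + of_int C)
                       = - f (of_int C * of_int n / of_int K)"
  shows "f (of_int C * (of_int j / of_int K + of_nat m)) = (-1) ^ m * f (of_int C * (of_int j / of_int K))"
proof (induction m)
  case 0
  then show ?case by simp
next
  case (Suc m)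
  have "of_int C * (of_int j / of_int K + of_nat (Suc m))
        = of_int C * of_int (j + int m * K) / of_int K + (of_int C :: rat)"
       "of_int C * of_int (j + int m * K) / of_int K = of_int C * (of_int j / of_int K + (of_nat m :: rat))"
    using K_nz by (simp_all add: field_simps)
  then show ?case
    using anti[of "j + int m * K"] Suc by simp
qed

lemma sM_mult_grid_bar:
  assumes "coprime (grid_bar M K x) (int M)"
  shows "[sM M K C q1 q2 \<phi> \<psi> pw x * grid_bar M K x = sM_num C q1 q2 \<phi> \<psi> pw x] (mod int M)"
  using cong_mult[OF cong_refl cong_mult_inv_mod[OF assms], of "sM_num C q1 q2 \<phi> \<psi> pw x"]
  unfolding sM_def sM_num_def by (simp add: ac_simps)

lemma sM_num_odd_pair:
  assumes K_nz: "K \<noteq> 0" and x_def: "x = of_int j / of_int K" and a_odd: "odd a"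
    and phi_anti: "\<And>n::int. \<phi> (of_int C * of_int n / of_int K + of_int C)
                       = - \<phi> (of_int C * of_int n / of_int K)"
    and psi_anti: "\<And>n::int. \<psi> (of_int C * of_int n / of_int K + of_int C)
                       = - \<psi> (of_int C * of_int n / of_int K)"
    and pw_mult: "\<And>(j::int) (a::nat).
       [pw (of_int j / of_int K + of_nat a) = pw (of_int j / of_int K) * p ^ a] (mod int M)"
  shows "[sM_num C q1 q2 \<phi> \<psi> pw (x + of_nat b) + sM_num C q1 q2 \<phi> \<psi> pw (x + of_nat b + of_nat a)
          = p ^ b * (pw x * (1 + p ^ a))] (mod int M)"
proof -
  have shift: "x + of_nat b + of_nat a = x + of_nat (b + a)" by simp
  have sign: "(-1 :: int) ^ (b + a) = - ((-1) ^ b)"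
    using a_odd by (simp add: power_add)
  have osc_sign_flip: "f (of_int C * (x + of_nat (b + a))) = - f (of_int C * (x + of_nat b))"
    if "\<And>m. f (of_int C * (x + of_nat m)) = (-1) ^ m * f (of_int C * x)" for f :: "rat \<Rightarrow> int"
    using that[of b] that[of "b + a"] sign by simp
  note phi_flip = osc_sign_flip[OF antiperiodic_grid_shift[OF K_nz phi_anti, of j, folded x_def]]
  note psi_flip = osc_sign_flip[OF antiperiodic_grid_shift[OF K_nz psi_anti, of j, folded x_def]]
  have "sM_num C q1 q2 \<phi> \<psi> pw (x + of_nat b) + sM_num C q1 q2 \<phi> \<psi> pw (x + of_nat b + of_nat a)
        = pw (x + of_nat b) + pw (x + of_nat (b + a))"
    unfolding sM_num_def shift phi_flip psi_flip by (simp add: algebra_simps)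
  also have "[\<dots> = pw x * p ^ b + pw x * p ^ (b + a)] (mod int M)"
    unfolding x_def by (intro cong_add pw_mult)
  also have "pw x * p ^ b + pw x * p ^ (b + a) = p ^ b * (pw x * (1 + p ^ a))"
    by (simp add: power_add algebra_simps)
  finally show ?thesis .
qed

theorem mainTheorem2:
  fixes M :: nat and p q1 q2 K C :: int
    and \<phi> \<psi> :: "rat \<Rightarrow> int" and pw :: "rat \<Rightarrow> int"
    and tj :: int and u v :: nat
  assumes p_unit: "coprime p (int M)"
    and K_pos: "K > 0" and C_pos: "C > 0" and KM: "coprime K (int M)"
    and phi_anti: "\<And>n::int. \<phi> (of_int C * of_int n / of_int K + of_int C)
                       = - \<phi> (of_int C * of_int n / of_int K)"
    and psi_anti: "\<And>n::int. \<psi> (of_int C * of_int n / of_int K + of_int C)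
                       = - \<psi> (of_int C * of_int n / of_int K)"
    and pw_mult: "\<And>(j::int) (a::nat).
       [pw (of_int j / of_int K + of_nat a) = pw (of_int j / of_int K) * p ^ a] (mod int M)"
    and t_def: "t = of_int tj / of_int K"
    and u0: "coprime (grid_bar M K t) (int M)"
    and u1: "coprime (grid_bar M K (t + 2 * of_nat v + 1)) (int M)"
    and u2: "coprime (grid_bar M K (t + 2 * of_nat u)) (int M)"
    and u3: "coprime (grid_bar M K (t + 2 * of_nat u + 2 * of_nat v + 1)) (int M)"
    and den_unit: "coprime
       (sM M K C q1 q2 \<phi> \<psi> pw (t + 2 * of_nat u) * grid_bar M K (t + 2 * of_nat u)
        + sM M K C q1 q2 \<phi> \<psi> pw (t + 2 * of_nat u + 2 * of_nat v + 1)
            * grid_bar M K (t + 2 * of_nat u + 2 * of_nat v + 1)) (int M)"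
  shows "[(sM M K C q1 q2 \<phi> \<psi> pw t * grid_bar M K t
           + sM M K C q1 q2 \<phi> \<psi> pw (t + 2 * of_nat v + 1) * grid_bar M K (t + 2 * of_nat v + 1))
          * inv_mod M
             (sM M K C q1 q2 \<phi> \<psi> pw (t + 2 * of_nat u) * grid_bar M K (t + 2 * of_nat u)
              + sM M K C q1 q2 \<phi> \<psi> pw (t + 2 * of_nat u + 2 * of_nat v + 1)
                  * grid_bar M K (t + 2 * of_nat u + 2 * of_nat v + 1))
         = inv_mod M (p ^ (2 * u))] (mod int M)"
proof -
  let ?S = "\<lambda>x. sM M K C q1 q2 \<phi> \<psi> pw x * grid_bar M K x"
  let ?N = "pw t * (1 + p ^ (2 * v + 1))"
  have K_nz: "K \<noteq> 0" using K_pos by simp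
  have odd_pair: "[?S (t + of_nat b) + ?S (t + of_nat b + of_nat (2 * v + 1)) = p ^ b * ?N] (mod int M)"
    if "coprime (grid_bar M K (t + of_nat b)) (int M)"
      and "coprime (grid_bar M K (t + of_nat b + of_nat (2 * v + 1))) (int M)" for b
    using cong_trans[OF cong_add[OF sM_mult_grid_bar[OF that(1)] sM_mult_grid_bar[OF that(2)]]
        sM_num_odd_pair[OF K_nz t_def _ phi_anti psi_anti pw_mult, where a = "2 * v + 1"]]
    by simp
  have num: "[?S t + ?S (t + 2 * of_nat v + 1) = ?N] (mod int M)"
    using odd_pair[of 0] u0 u1 by (simp add: ac_simps)
  have den: "[?S (t + 2 * of_nat u) + ?S (t + 2 * of_nat u + 2 * of_nat v + 1) = p ^ (2 * u) * ?N] (mod int M)"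
    using odd_pair[of "2 * u"] u2 u3 by (simp add: ac_simps)
  show ?thesis
    using cong_mult[OF num cong_refl] cong_mult_inv_mod_factor[OF den_unit den] by (rule cong_trans)
qed

end
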